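(* Let $r\ge 2$, let $x_1,\dots,x_{r-1},t\in\mathbb{C}$, and let $G$ be a finite graph (loops and multiple edges allowed) with $n$ vertices, each of degree at least $1$. Let $V=\mathbb{C}^r$, $B=I_r$ (so $B_{ij}=\delta_{ij}$), and let $\mathcal{A}=\{A_1,A_2,\dots\}$ be the symmetric tensors with components $A_1^i=t$ if $i=r$ and $A_1^i=0$ if $i\neq r$, and for $d\ge 2$ $$A_d^{i_1\dots i_d}=\begin{cases} x_i & \text{if } (i_1,\dots,i_d) \text{ is a permutation of } (i,i,r,\dots,r) \text{ for some } i\in\{1,\dots,r-1\},\\ t & \text{if } (i_1,\dots,i_d)=(r,\dots,r),\\ 0&\text{otherwise.}\end{cases}$$ Then $$\mathcal{F}_{\mathcal{A},I_r}(G)=\sum_{|\lambda|\le n} t^{\,n-|\lambda|}\,p_\lambda(x_1,\dots,x_{r-1})\,N_\lambda(G),$$ the sum being over all partitions $\lambda$ (including the empty partition) of weight $|\lambda|\le n$.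
   Context: Graph function: for $G$ with vertices $v_1,\dots,v_n$ of degrees $d_1,\dots,d_n$ and set of half-edges $H$ (each edge, including a loop, consists of two half-edges), $\mathcal{F}_{\mathcal{A},B}(G)=\sum_{c:H\to\{1,\dots,r\}}\prod_{\{h,h'\}\in E(G)}B_{c(h)c(h')}\prod_{k=1}^n A_{d_k}^{c(h_{k,1})\dots c(h_{k,d_k})}$, where $h_{k,1},\dots,h_{k,d_k}$ are the half-edges at $v_k$; i.e. a copy of $A_{d_k}$ is placed at each vertex and contracted along every edge with $B$. A (multi)cycle of $G$ is a $2$-valent subgraph $C$ (every vertex of $C$ has degree $2$ in $C$, loops counted twice; $C$ need not be connected; the empty subgraph is allowed). Its length $|C|$ is its number of edges; if $C_1,\dots,C_l$ are its connected components, its type is the partition $\lambda_C=[|C_1|,\dots,|C_l|]$ of $|C|$. $N_\lambda(G)$ is the number of cycles of $G$ of type $\lambda$. For $k\ge1$, $p_k(x_1,\dots,x_{r-1})=\sum_i x_i^k$, and for a partition $\lambda=[k_1,\dots,k_l]$, $p_\lambda=\prod_{j=1}^l p_{k_j}$ (with $p_\emptyset=1$); $|\lambda|=k_1+\dots+k_l$. *)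

theory Defs
  imports Complex_Main "HOL-Library.Multiset" "HOL-Library.Product_Lexorder" "HOL-Library.FuncSet"
begin

text \<open>Each edge e has two half-edges (e,False) and (e,True), attached to fst (ends e) and
snd (ends e) respectively; a loop thus contributes two half-edges at its vertex.\<close>

definition half_edges :: "'e set \<Rightarrow> ('e \<times> bool) set" where
  "half_edges E = E \<times> UNIV"

definition hvert :: "('e \<Rightarrow> 'v \<times> 'v) \<Rightarrow> 'e \<times> bool \<Rightarrow> 'v" where
  "hvert ends h = (if snd h then snd (ends (fst h)) else fst (ends (fst h)))"

definition halfs_at :: "'e set \<Rightarrow> ('e \<Rightarrow> 'v \<times> 'v) \<Rightarrow> 'v \<Rightarrow> ('e \<times> bool) set" where
  "halfs_at E ends v = {h \<in> half_edges E. hvert ends h = v}"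

definition deg :: "'e set \<Rightarrow> ('e \<Rightarrow> 'v \<times> 'v) \<Rightarrow> 'v \<Rightarrow> nat" where
  "deg E ends v = card (halfs_at E ends v)"

definition multigraph :: "'v set \<Rightarrow> 'e set \<Rightarrow> ('e \<Rightarrow> 'v \<times> 'v) \<Rightarrow> bool" where
  "multigraph V E ends \<longleftrightarrow> finite V \<and> finite E \<and>
     (\<forall>e\<in>E. fst (ends e) \<in> V \<and> snd (ends e) \<in> V)"

text \<open>Graph function: colours 1..r on half-edges; A d is the order-d tensor, given as a
function of the list of its d indices (indices of half-edges at a vertex listed in a fixed
order; the tensors considered are symmetric); B is the edge matrix.\<close>

definition graph_fun ::
  "nat \<Rightarrow> (nat \<Rightarrow> nat list \<Rightarrow> complex) \<Rightarrow> (nat \<Rightarrow> nat \<Rightarrow> complex)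
   \<Rightarrow> 'v set \<Rightarrow> ('e::linorder) set \<Rightarrow> ('e \<Rightarrow> 'v \<times> 'v) \<Rightarrow> complex" where
  "graph_fun r A B V E ends =
     (\<Sum>c \<in> Pi\<^sub>E (half_edges E) (\<lambda>_. {1..r}).
        (\<Prod>e\<in>E. B (c (e, False)) (c (e, True))) *
        (\<Prod>v\<in>V. A (deg E ends v) (map c (sorted_list_of_set (halfs_at E ends v)))))"

definition thmA :: "nat \<Rightarrow> (nat \<Rightarrow> complex) \<Rightarrow> complex \<Rightarrow> nat \<Rightarrow> nat list \<Rightarrow> complex" where
  "thmA r x t d is =
     (if d = 1 then (if is = [r] then t else 0)
      else if (\<exists>i\<in>{1..<r}. length is = d \<and> mset is = {#i, i#} + replicate_mset (d - 2) r)
        then x (SOME i. i \<in> {1..<r} \<and> mset is = {#i, i#} + replicate_mset (d - 2) r)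
      else if is = replicate d r then t
      else 0)"

definition identity_mat :: "nat \<Rightarrow> nat \<Rightarrow> complex" where
  "identity_mat i j = (if i = j then 1 else 0)"

text \<open>Cycles: edge sets S \<subseteq> E in which every vertex has degree 0 or 2 (the 2-valent
subgraph is determined by its edges, as it has no isolated vertices).\<close>

definition is_cycle :: "'e set \<Rightarrow> ('e \<Rightarrow> 'v \<times> 'v) \<Rightarrow> 'e set \<Rightarrow> bool" where
  "is_cycle E ends S \<longleftrightarrow> S \<subseteq> E \<and> (\<forall>v. deg S ends v = 0 \<or> deg S ends v = 2)"

definition edge_adj :: "('e \<Rightarrow> 'v \<times> 'v) \<Rightarrow> 'e set \<Rightarrow> ('e \<times> 'e) set" where
  "edge_adj ends S = {(e, f). e \<in> S \<and> f \<in> S \<and> (\<exists>a b. hvert ends (e, a) = hvert ends (f, b))}"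

definition components :: "('e \<Rightarrow> 'v \<times> 'v) \<Rightarrow> 'e set \<Rightarrow> 'e set set" where
  "components ends S = S // ((edge_adj ends S)\<^sup>+)"

definition cycle_type :: "('e \<Rightarrow> 'v \<times> 'v) \<Rightarrow> 'e set \<Rightarrow> nat multiset" where
  "cycle_type ends S = image_mset card (mset_set (components ends S))"

definition N_count :: "'e set \<Rightarrow> ('e \<Rightarrow> 'v \<times> 'v) \<Rightarrow> nat multiset \<Rightarrow> nat" where
  "N_count E ends lam = card {S. is_cycle E ends S \<and> cycle_type ends S = lam}"

definition power_sum :: "nat \<Rightarrow> (nat \<Rightarrow> complex) \<Rightarrow> nat \<Rightarrow> complex" where
  "power_sum r x k = (\<Sum>i\<in>{1..<r}. x i ^ k)"

definition power_sum_part :: "nat \<Rightarrow> (nat \<Rightarrow> complex) \<Rightarrow> nat multiset \<Rightarrow> complex" where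
  "power_sum_part r x lam = (\<Prod>k\<in>#lam. power_sum r x k)"

definition partitions_upto :: "nat \<Rightarrow> nat multiset set" where
  "partitions_upto n = {lam. 0 \<notin># lam \<and> sum_mset lam \<le> n}"

end

theory Submission
  imports Defs
begin

(*
  Since B is the identity, only colourings that give both half-edges of every edge the same
  colour contribute, so the graph function is a sum over edge colourings f : E -> {1..r} of the
  product of the vertex tensors. Call the colour r neutral. The tensor at a vertex is non-zero
  only if all its half-edges are neutral (factor t) or exactly two of them carry one common
  colour i < r (factor x_i). Hence the non-neutral edges of a colouring of non-zero weight form a
  cycle S on which the colour is constant along components, and conversely every cycle S with a
  choice of colour below r for each component gives such a colouring, of weight
  t^(n - |S|) * prod_C x_(colour of C)^|C|. Summing over the colour choices yields
  prod_C p_|C| = p_(type of S), and grouping the cycles by type gives the formula.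
*)

lemma mem_half_edges [simp]: "h \<in> half_edges S \<longleftrightarrow> fst h \<in> S"
  by (cases h) (simp add: half_edges_def)

lemma finite_half_edges [simp]: "finite S \<Longrightarrow> finite (half_edges S)"
  by (simp add: half_edges_def)

lemma card_half_edges: "finite S \<Longrightarrow> card (half_edges S) = 2 * card S"
  by (simp add: half_edges_def card_cartesian_product)

lemma mem_halfs_at [simp]: "h \<in> halfs_at S ends v \<longleftrightarrow> fst h \<in> S \<and> hvert ends h = v"
  by (simp add: halfs_at_def)

lemma finite_halfs_at [simp]: "finite S \<Longrightarrow> finite (halfs_at S ends v)"
  by (rule finite_subset[of _ "half_edges S"]) (auto simp: halfs_at_def)

definition verts_of :: "('e \<Rightarrow> 'v \<times> 'v) \<Rightarrow> 'e set \<Rightarrow> 'v set" where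
  "verts_of ends S = hvert ends ` half_edges S"

lemma verts_of_mono: "C \<subseteq> S \<Longrightarrow> verts_of ends C \<subseteq> verts_of ends S"
  unfolding verts_of_def half_edges_def by blast

lemma mem_verts_of: "v \<in> verts_of ends S \<longleftrightarrow> halfs_at S ends v \<noteq> {}"
  unfolding verts_of_def by (force simp: image_iff)

lemma finite_verts_of [simp]: "finite S \<Longrightarrow> finite (verts_of ends S)"
  by (simp add: verts_of_def)

lemma deg_pos_iff_mem_verts_of:
  "finite S \<Longrightarrow> 0 < deg S ends v \<longleftrightarrow> v \<in> verts_of ends S"
  by (simp add: deg_def card_gt_0_iff mem_verts_of)

lemma sum_deg_verts_of:
  assumes "finite S"
  shows "(\<Sum>v\<in>verts_of ends S. deg S ends v) = 2 * card S"
proof -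
  have "half_edges S = (\<Union>v\<in>verts_of ends S. halfs_at S ends v)"
    by (auto simp: verts_of_def)
  then have "2 * card S = card (\<Union>v\<in>verts_of ends S. halfs_at S ends v)"
    using card_half_edges[OF assms] by simp
  also have "\<dots> = (\<Sum>v\<in>verts_of ends S. deg S ends v)"
    unfolding deg_def by (rule card_UN_disjoint) (use assms in \<open>auto simp: verts_of_def\<close>)
  finally show ?thesis ..
qed

lemma card_verts_of_2_regular:
  assumes "finite S" "\<And>v. v \<in> verts_of ends S \<Longrightarrow> deg S ends v = 2"
  shows "card (verts_of ends S) = card S"
  using sum_deg_verts_of[OF assms(1), of ends] assms(2) by simp

lemma deg_is_cycle:
  assumes "is_cycle E ends S" "finite S" "v \<in> verts_of ends S"
  shows "deg S ends v = 2"
proof -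
  have "deg S ends v = 0 \<or> deg S ends v = 2"
    using assms(1) by (simp add: is_cycle_def)
  then show ?thesis
    using assms(2,3) deg_pos_iff_mem_verts_of[of S ends v] by auto
qed

lemma card_verts_of_is_cycle:
  "is_cycle E ends S \<Longrightarrow> finite S \<Longrightarrow> card (verts_of ends S) = card S"
  by (rule card_verts_of_2_regular) (auto intro: deg_is_cycle)

lemma edge_adj_halfs_at:
  assumes "(e, a) \<in> halfs_at S ends v" "(e', b) \<in> halfs_at S ends v"
  shows "(e, e') \<in> edge_adj ends S"
proof -
  have "e \<in> S" "e' \<in> S" "hvert ends (e, a) = hvert ends (e', b)"
    using assms by auto
  then show ?thesis
    unfolding edge_adj_def by blast
qed

lemma edge_adj_trancl_subset: "(edge_adj ends S)\<^sup>+ \<subseteq> S \<times> S"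
  by (rule trancl_subset_Sigma) (auto simp: edge_adj_def)

lemma equiv_edge_adj_trancl: "equiv S ((edge_adj ends S)\<^sup>+)"
proof (rule equivI)
  show "refl_on S ((edge_adj ends S)\<^sup>+)"
    using edge_adj_trancl_subset
    by (auto simp: refl_on_def edge_adj_def intro!: r_into_trancl)
  have "sym (edge_adj ends S)"
    unfolding sym_def edge_adj_def by (blast intro: sym)
  then show "sym ((edge_adj ends S)\<^sup>+)"
    by (rule sym_trancl)
qed (rule trans_trancl edge_adj_trancl_subset)+

lemma finite_components: "finite S \<Longrightarrow> finite (components ends S)"
  unfolding components_def by (rule finite_quotient[OF _ edge_adj_trancl_subset])

lemma Union_components: "\<Union> (components ends S) = S"
  unfolding components_def by (rule Union_quotient[OF equiv_edge_adj_trancl])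

lemma components_disjoint:
  "C \<in> components ends S \<Longrightarrow> C' \<in> components ends S \<Longrightarrow> C \<noteq> C' \<Longrightarrow> C \<inter> C' = {}"
  unfolding components_def using quotient_disj[OF equiv_edge_adj_trancl] by metis

lemma components_nonempty: "C \<in> components ends S \<Longrightarrow> C \<noteq> {}"
  unfolding components_def by (rule in_quotient_imp_non_empty[OF equiv_edge_adj_trancl])

lemma components_subset: "C \<in> components ends S \<Longrightarrow> C \<subseteq> S"
  using Union_upper[of C "components ends S"] by (simp add: Union_components)

lemma components_closed:
  assumes "C \<in> components ends S" "e \<in> C" "(e, e') \<in> edge_adj ends S"
  shows "e' \<in> C"
  using assms(1) unfolding components_def
  by (rule in_quotient_imp_closed[OF equiv_edge_adj_trancl _ assms(2) r_into_trancl[OF assms(3)]])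

lemma components_const:
  assumes "\<And>e e'. (e, e') \<in> edge_adj ends S \<Longrightarrow> f e = f e'"
    and "C \<in> components ends S" "e \<in> C" "e' \<in> C"
  shows "f e = f e'"
proof -
  have "(e, e') \<in> (edge_adj ends S)\<^sup>+"
    using assms(2-4) in_quotient_imp_in_rel[OF equiv_edge_adj_trancl, of C S ends e e']
    by (simp add: components_def)
  then show ?thesis
  proof (induction rule: trancl_induct)
    case (step e' e'')
    then show ?case
      using assms(1)[of e' e''] by simp
  qed (rule assms(1))
qed

definition component_of :: "('e \<Rightarrow> 'v \<times> 'v) \<Rightarrow> 'e set \<Rightarrow> 'e \<Rightarrow> 'e set" where
  "component_of ends S e = (edge_adj ends S)\<^sup>+ `` {e}"

lemma mem_component_of: "e \<in> S \<Longrightarrow> e \<in> component_of ends S e"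
  unfolding component_of_def by (rule equiv_class_self[OF equiv_edge_adj_trancl])

lemma component_of_in_components: "e \<in> S \<Longrightarrow> component_of ends S e \<in> components ends S"
  unfolding components_def component_of_def by (rule quotientI)

lemma component_of_eq:
  assumes "C \<in> components ends S" "e \<in> C"
  shows "component_of ends S e = C"
proof -
  obtain a where a: "C = (edge_adj ends S)\<^sup>+ `` {a}"
    using assms(1) unfolding components_def by (rule quotientE)
  with assms(2) have "(a, e) \<in> (edge_adj ends S)\<^sup>+"
    by simp
  then show ?thesis
    unfolding component_of_def a by (simp add: equiv_class_eq[OF equiv_edge_adj_trancl])
qed

lemma halfs_at_component:
  assumes "C \<in> components ends S" "v \<in> verts_of ends C"
  shows "halfs_at C ends v = halfs_at S ends v"
proof -
  obtain h where "h \<in> halfs_at C ends v"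
    using assms(2) by (meson ex_in_conv mem_verts_of)
  then have "fst h \<in> C" "h \<in> halfs_at S ends v"
    using components_subset[OF assms(1)] by auto
  then have "fst h' \<in> C" if "h' \<in> halfs_at S ends v" for h'
    using that components_closed[OF assms(1)]
      edge_adj_halfs_at[of "fst h" "snd h" S ends v "fst h'" "snd h'"]
    by simp
  then show ?thesis
    using components_subset[OF assms(1)] by auto
qed

lemma verts_of_components_disjoint:
  assumes "C \<in> components ends S" "C' \<in> components ends S" "C \<noteq> C'"
  shows "verts_of ends C \<inter> verts_of ends C' = {}"
proof (rule ccontr)
  assume "verts_of ends C \<inter> verts_of ends C' \<noteq> {}"
  then obtain v where v: "v \<in> verts_of ends C" "v \<in> verts_of ends C'"
    by blast
  then obtain h where "h \<in> halfs_at C' ends v"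
    by (meson ex_in_conv mem_verts_of)
  moreover have "halfs_at C ends v = halfs_at C' ends v"
    using halfs_at_component[OF assms(1) v(1)] halfs_at_component[OF assms(2) v(2)] by simp
  ultimately have "fst h \<in> C \<inter> C'"
    by (metis IntI mem_halfs_at)
  then show False
    using components_disjoint[OF assms] by simp
qed

lemma verts_of_Union_components: "verts_of ends S = (\<Union>C\<in>components ends S. verts_of ends C)"
proof -
  have "half_edges S = (\<Union>C\<in>components ends S. half_edges C)"
    using Union_components[of ends S] by (auto simp: half_edges_def)
  then show ?thesis
    by (simp add: verts_of_def image_UN)
qed

lemma card_verts_of_component:
  assumes "is_cycle E ends S" "finite S" "C \<in> components ends S"
  shows "card (verts_of ends C) = card C"
proof (rule card_verts_of_2_regular)
  show "finite C"
    using assms(2) components_subset[OF assms(3)] by (rule finite_subset[rotated])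
  fix v assume v: "v \<in> verts_of ends C"
  then have "v \<in> verts_of ends S"
    using verts_of_mono[OF components_subset[OF assms(3)], of ends] by blast
  then show "deg C ends v = 2"
    using deg_is_cycle[OF assms(1,2)] halfs_at_component[OF assms(3) v] by (simp add: deg_def)
qed

lemma sum_mset_cycle_type:
  assumes "finite S"
  shows "sum_mset (cycle_type ends S) = card S"
proof -
  have "sum_mset (cycle_type ends S) = (\<Sum>C\<in>components ends S. card C)"
    by (simp add: cycle_type_def sum_unfold_sum_mset)
  also have "\<dots> = card (\<Union> (components ends S))"
  proof (rule card_Union_disjoint[symmetric])
    show "pairwise disjnt (components ends S)"
      unfolding pairwise_def disjnt_def using components_disjoint by blast
    show "finite C" if "C \<in> components ends S" for C
      using assms components_subset[OF that] by (rule finite_subset[rotated])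
  qed
  finally show ?thesis
    by (simp add: Union_components)
qed

lemma zero_not_in_cycle_type:
  assumes "finite S"
  shows "0 \<notin># cycle_type ends S"
proof
  assume "0 \<in># cycle_type ends S"
  then obtain C where C: "C \<in> components ends S" "card C = 0"
    using finite_components[OF assms, of ends] by (auto simp: cycle_type_def)
  moreover have "finite C"
    using assms components_subset[OF C(1)] by (rule finite_subset[rotated])
  ultimately show False
    using components_nonempty by auto
qed

lemma power_sum_part_cycle_type:
  "power_sum_part r x (cycle_type ends S) = (\<Prod>C\<in>components ends S. power_sum r x (card C))"
  by (simp add: power_sum_part_def cycle_type_def prod_unfold_prod_mset image_mset.compositionality comp_def)

lemma finite_partitions_upto: "finite (partitions_upto n)"
proof (rule finite_subset)
  have "size M \<le> sum_mset M" if "0 \<notin># M" for M :: "nat multiset"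
    using that by (induction M) auto
  moreover have "set_mset M \<subseteq> {0..sum_mset M}" for M :: "nat multiset"
    by (auto simp: sum_mset.remove)
  ultimately show "partitions_upto n \<subseteq> (\<Union>k\<le>n. multisets_of_size {0..n} k)"
    by (fastforce simp: partitions_upto_def multisets_of_size_def)
qed auto

lemma finite_cycles: "finite E \<Longrightarrow> finite {S. is_cycle E ends S}"
  by (rule finite_subset[of _ "Pow E"]) (auto simp: is_cycle_def)

lemma sum_cycles_by_type:
  fixes g :: "nat \<Rightarrow> nat multiset \<Rightarrow> 'a::comm_semiring_1"
  assumes "finite E" "\<And>S. is_cycle E ends S \<Longrightarrow> card S \<le> n"
  shows "(\<Sum>S | is_cycle E ends S. g (card S) (cycle_type ends S))
    = (\<Sum>lam\<in>partitions_upto n. g (sum_mset lam) lam * of_nat (N_count E ends lam))"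
proof -
  have finite: "finite S" if "is_cycle E ends S" for S
    using that assms(1) by (auto simp: is_cycle_def intro: finite_subset)
  have types: "cycle_type ends ` {S. is_cycle E ends S} \<subseteq> partitions_upto n"
    using assms(2) by (auto simp: partitions_upto_def finite sum_mset_cycle_type zero_not_in_cycle_type)
  have "(\<Sum>S | is_cycle E ends S. g (card S) (cycle_type ends S))
    = (\<Sum>lam\<in>partitions_upto n. \<Sum>S | is_cycle E ends S \<and> cycle_type ends S = lam.
        g (card S) (cycle_type ends S))"
    using sum.group[OF finite_cycles[OF assms(1)] finite_partitions_upto types,
        of "\<lambda>S. g (card S) (cycle_type ends S)"] by simp
  also have "\<dots> = (\<Sum>lam\<in>partitions_upto n. \<Sum>S | is_cycle E ends S \<and> cycle_type ends S = lam.
        g (sum_mset lam) lam)"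
    by (intro sum.cong refl) (auto simp: finite sum_mset_cycle_type)
  finally show ?thesis
    by (simp add: N_count_def mult.commute)
qed

lemma mset_eq_filter_plus_replicate:
  "mset xs = {#j \<in># mset xs. j \<noteq> r#} + replicate_mset (count (mset xs) r) r"
  using multiset_partition[of "mset xs" "\<lambda>j. j \<noteq> r"] by (simp add: filter_eq_replicate_mset)

lemma filter_mset_neq_replicate_mset [simp]: "{#j \<in># replicate_mset n r. j \<noteq> r#} = {#}"
  by (induction n) auto

lemma thmA_neutral:
  assumes "length is = d" "{#j \<in># mset is. j \<noteq> r#} = {#}"
  shows "thmA r x t d is = t"
proof -
  have "is = replicate d r"
    using assms replicate_length_same[of "is" r] by (auto simp: filter_mset_eq_mempty_iff)
  moreover have "mset is \<noteq> {#i, i#} + M" if "i \<in> {1..<r}" for i M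
  proof
    assume "mset is = {#i, i#} + M"
    then have "i \<in># mset is"
      by simp
    then show False
      using that \<open>is = replicate d r\<close> by (auto split: if_splits)
  qed
  ultimately show ?thesis
    unfolding thmA_def by auto
qed

lemma thmA_pair:
  assumes "length is = d" "i \<in> {1..<r}" "{#j \<in># mset is. j \<noteq> r#} = {#i, i#}"
  shows "thmA r x t d is = x i"
proof -
  have "mset is = {#i, i#} + replicate_mset (count (mset is) r) r"
    using mset_eq_filter_plus_replicate[of "is" r] assms(3) by simp
  moreover have d: "d = count (mset is) r + 2"
    using arg_cong[OF calculation, of size] assms(1) by simp
  ultimately have pair: "mset is = {#i, i#} + replicate_mset (d - 2) r"
    by simp
  have "d \<noteq> 1"
    using d by simp
  have "(SOME j. j \<in> {1..<r} \<and> mset is = {#j, j#} + replicate_mset (d - 2) r) = i"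
  proof (rule some_equality)
    fix j assume "j \<in> {1..<r} \<and> mset is = {#j, j#} + replicate_mset (d - 2) r"
    then have "j \<in># mset is" "j \<noteq> r"
      by auto
    then show "j = i"
      using pair by (auto split: if_splits)
  qed (use pair assms(2) in simp)
  then show ?thesis
    using pair assms(1,2) \<open>d \<noteq> 1\<close> unfolding thmA_def by auto
qed

lemma thmA_nonzero:
  assumes "length is = d" "thmA r x t d is \<noteq> 0"
  shows "{#j \<in># mset is. j \<noteq> r#} = {#} \<or> (\<exists>i\<in>{1..<r}. {#j \<in># mset is. j \<noteq> r#} = {#i, i#})"
proof -
  have "is = replicate d r \<or> (\<exists>i\<in>{1..<r}. mset is = {#i, i#} + replicate_mset (d - 2) r)"
    using assms unfolding thmA_def by (auto split: if_splits)
  then show ?thesis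
  proof
    assume "is = replicate d r"
    then show ?thesis
      by simp
  next
    assume "\<exists>i\<in>{1..<r}. mset is = {#i, i#} + replicate_mset (d - 2) r"
    then obtain i where "i \<in> {1..<r}" "mset is = {#i, i#} + replicate_mset (d - 2) r"
      by blast
    then show ?thesis
      by auto
  qed
qed

definition colours_at ::
  "'e::linorder set \<Rightarrow> ('e \<Rightarrow> 'v \<times> 'v) \<Rightarrow> ('e \<Rightarrow> nat) \<Rightarrow> 'v \<Rightarrow> nat list" where
  "colours_at E ends f v = map (f \<circ> fst) (sorted_list_of_set (halfs_at E ends v))"

definition support_edges :: "nat \<Rightarrow> 'e set \<Rightarrow> ('e \<Rightarrow> nat) \<Rightarrow> 'e set" where
  "support_edges r E f = {e \<in> E. f e \<noteq> r}"

lemma finite_support_edges [simp]: "finite E \<Longrightarrow> finite (support_edges r E f)"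
  by (simp add: support_edges_def)

lemma mset_sorted_list_of_set: "mset (sorted_list_of_set A) = mset_set A"
  by (metis mset_sorted_list_of_multiset sorted_list_of_mset_set)

lemma length_colours_at: "finite E \<Longrightarrow> length (colours_at E ends f v) = deg E ends v"
  by (simp add: colours_at_def deg_def)

lemma filter_mset_colours_at:
  assumes "finite E"
  shows "{#j \<in># mset (colours_at E ends f v). j \<noteq> r#}
    = image_mset (f \<circ> fst) (mset_set (halfs_at (support_edges r E f) ends v))"
proof -
  have "halfs_at (support_edges r E f) ends v = {h \<in> halfs_at E ends v. f (fst h) \<noteq> r}"
    by (auto simp: support_edges_def)
  then show ?thesis
    using assms by (simp add: colours_at_def mset_sorted_list_of_set filter_mset_image_mset
        filter_mset_mset_set)
qed

lemma image_mset_mset_set_eq_replicate_mset: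
  assumes "finite K"
  shows "image_mset g (mset_set K) = replicate_mset n c \<longleftrightarrow> card K = n \<and> (\<forall>k\<in>K. g k = c)"
proof
  assume eq: "image_mset g (mset_set K) = replicate_mset n c"
  show "card K = n \<and> (\<forall>k\<in>K. g k = c)"
  proof
    show "card K = n"
      using arg_cong[OF eq, of size] by simp
    show "\<forall>k\<in>K. g k = c"
      using eq assms by (metis finite_set_mset_mset_set image_eqI in_replicate_mset set_image_mset)
  qed
next
  assume K: "card K = n \<and> (\<forall>k\<in>K. g k = c)"
  then have "image_mset g (mset_set K) = image_mset (\<lambda>_. c) (mset_set K)"
    using assms by (intro image_mset_cong) simp
  also have "\<dots> = replicate_mset n c"
    using K assms by (simp add: image_mset_const_eq)
  finally show "image_mset g (mset_set K) = replicate_mset n c" .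
qed

lemma thmA_colours_at_neutral:
  assumes "finite E" "halfs_at (support_edges r E f) ends v = {}"
  shows "thmA r x t (deg E ends v) (colours_at E ends f v) = t"
  using assms by (intro thmA_neutral) (simp_all add: length_colours_at filter_mset_colours_at)

lemma thmA_colours_at_pair:
  assumes "finite E" "i \<in> {1..<r}" "card (halfs_at (support_edges r E f) ends v) = 2"
    "\<forall>h\<in>halfs_at (support_edges r E f) ends v. f (fst h) = i"
  shows "thmA r x t (deg E ends v) (colours_at E ends f v) = x i"
proof (rule thmA_pair[OF length_colours_at[OF assms(1)] assms(2)])
  show "{#j \<in># mset (colours_at E ends f v). j \<noteq> r#} = {#i, i#}"
  proof -
    have "image_mset (f \<circ> fst) (mset_set (halfs_at (support_edges r E f) ends v))
        = replicate_mset 2 i"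
      using assms by (subst image_mset_mset_set_eq_replicate_mset) auto
    then show ?thesis
      by (simp add: filter_mset_colours_at[OF assms(1)] numeral_2_eq_2)
  qed
qed

lemma thmA_colours_at_nonzero:
  assumes "finite E" "thmA r x t (deg E ends v) (colours_at E ends f v) \<noteq> 0"
  defines "H \<equiv> halfs_at (support_edges r E f) ends v"
  shows "H = {} \<or> (\<exists>i\<in>{1..<r}. card H = 2 \<and> (\<forall>h\<in>H. f (fst h) = i))"
  using thmA_nonzero[OF length_colours_at[OF assms(1)] assms(2)] assms(1)
    image_mset_mset_set_eq_replicate_mset[of H "f \<circ> fst" 2]
  by (auto simp: filter_mset_colours_at H_def numeral_2_eq_2 mset_set_empty_iff)

lemma prod_identity_mat:
  "finite E \<Longrightarrow> (\<Prod>e\<in>E. identity_mat (c (e, False)) (c (e, True)))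
    = (if \<forall>e\<in>E. c (e, False) = c (e, True) then 1 else 0)"
  by (induction E rule: finite_induct) (auto simp: identity_mat_def)

lemma bij_betw_edge_colourings:
  "bij_betw (\<lambda>f. restrict (f \<circ> fst) (half_edges E)) (E \<rightarrow>\<^sub>E A)
     {c \<in> half_edges E \<rightarrow>\<^sub>E A. \<forall>e\<in>E. c (e, False) = c (e, True)}"
proof (rule bij_betw_byWitness[where f' = "\<lambda>c. restrict (\<lambda>e. c (e, False)) E"])
  show "\<forall>f\<in>E \<rightarrow>\<^sub>E A. restrict (\<lambda>e. restrict (f \<circ> fst) (half_edges E) (e, False)) E = f"
    by (auto simp: fun_eq_iff PiE_def extensional_def)
  show "\<forall>c\<in>{c \<in> half_edges E \<rightarrow>\<^sub>E A. \<forall>e\<in>E. c (e, False) = c (e, True)}.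
      restrict (restrict (\<lambda>e. c (e, False)) E \<circ> fst) (half_edges E) = c"
  proof (intro ballI ext)
    fix c h
    assume c: "c \<in> {c \<in> half_edges E \<rightarrow>\<^sub>E A. \<forall>e\<in>E. c (e, False) = c (e, True)}"
    show "restrict (restrict (\<lambda>e. c (e, False)) E \<circ> fst) (half_edges E) h = c h"
    proof (cases "fst h \<in> E")
      case True
      then show ?thesis
        using c by (cases h; cases "snd h") auto
    next
      case False
      then show ?thesis
        using c by (cases h) (auto simp: PiE_def extensional_def)
    qed
  qed
qed (auto simp: PiE_def extensional_def)

lemma graph_fun_identity_mat:
  assumes "finite E"
  shows "graph_fun r A identity_mat V E ends
    = (\<Sum>f\<in>E \<rightarrow>\<^sub>E {1..r}. \<Prod>v\<in>V. A (deg E ends v) (colours_at E ends f v))"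
proof -
  define W where "W c = (\<Prod>v\<in>V. A (deg E ends v) (map c (sorted_list_of_set (halfs_at E ends v))))"
    for c
  have "graph_fun r A identity_mat V E ends
      = (\<Sum>c\<in>half_edges E \<rightarrow>\<^sub>E {1..r}. if \<forall>e\<in>E. c (e, False) = c (e, True) then W c else 0)"
    unfolding graph_fun_def W_def using assms by (intro sum.cong) (simp_all add: prod_identity_mat)
  also have "\<dots> = sum W {c \<in> half_edges E \<rightarrow>\<^sub>E {1..r}. \<forall>e\<in>E. c (e, False) = c (e, True)}"
    using assms by (simp add: sum.inter_filter finite_PiE)
  also have "\<dots> = (\<Sum>f\<in>E \<rightarrow>\<^sub>E {1..r}. W (restrict (f \<circ> fst) (half_edges E)))"
    by (rule sum.reindex_bij_betw[OF bij_betw_edge_colourings, symmetric])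
  also have "\<dots> = (\<Sum>f\<in>E \<rightarrow>\<^sub>E {1..r}. \<Prod>v\<in>V. A (deg E ends v) (colours_at E ends f v))"
  proof -
    have "map (restrict (f \<circ> fst) (half_edges E)) (sorted_list_of_set (halfs_at E ends v))
        = colours_at E ends f v" for f v
      using assms unfolding colours_at_def by (intro map_cong) auto
    then show ?thesis
      by (simp add: W_def)
  qed
  finally show ?thesis .
qed

definition cycle_colouring ::
  "nat \<Rightarrow> 'e set \<Rightarrow> ('e \<Rightarrow> 'v \<times> 'v) \<Rightarrow> 'e set \<Rightarrow> ('e set \<Rightarrow> nat) \<Rightarrow> 'e \<Rightarrow> nat" where
  "cycle_colouring r E ends S \<kappa> = (\<lambda>e\<in>E. if e \<in> S then \<kappa> (component_of ends S e) else r)"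

lemma cycle_colouring_component:
  assumes "S \<subseteq> E" "C \<in> components ends S" "e \<in> C"
  shows "cycle_colouring r E ends S \<kappa> e = \<kappa> C"
proof -
  have "e \<in> S"
    using assms(2,3) components_subset by blast
  then show ?thesis
    using assms by (simp add: cycle_colouring_def component_of_eq subsetD)
qed

lemma component_colour_range:
  "\<kappa> \<in> components ends S \<rightarrow>\<^sub>E {1..<r} \<Longrightarrow> e \<in> S \<Longrightarrow> \<kappa> (component_of ends S e) \<in> {1..<r}"
  by (rule PiE_mem[OF _ component_of_in_components])

lemma cycle_colouring_PiE:
  assumes "1 \<le> r" "\<kappa> \<in> components ends S \<rightarrow>\<^sub>E {1..<r}"
  shows "cycle_colouring r E ends S \<kappa> \<in> E \<rightarrow>\<^sub>E {1..r}"
proof -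
  have "\<kappa> (component_of ends S e) \<in> {1..r}" if "e \<in> S" for e
    using component_colour_range[OF assms(2) that] by simp
  then show ?thesis
    using assms(1) by (auto simp: cycle_colouring_def)
qed

lemma support_edges_cycle_colouring:
  assumes "S \<subseteq> E" "\<kappa> \<in> components ends S \<rightarrow>\<^sub>E {1..<r}"
  shows "support_edges r E (cycle_colouring r E ends S \<kappa>) = S"
  using assms(1) component_colour_range[OF assms(2)]
  by (auto simp: support_edges_def cycle_colouring_def)

lemma cycle_colouring_inject:
  assumes S: "S \<subseteq> E" "\<kappa> \<in> components ends S \<rightarrow>\<^sub>E {1..<r}"
    and S': "S' \<subseteq> E" "\<kappa>' \<in> components ends S' \<rightarrow>\<^sub>E {1..<r}"
    and eq: "cycle_colouring r E ends S \<kappa> = cycle_colouring r E ends S' \<kappa>'"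
  shows "S = S' \<and> \<kappa> = \<kappa>'"
proof -
  have "S = S'"
    using support_edges_cycle_colouring[OF S] support_edges_cycle_colouring[OF S'] eq by simp
  moreover have "\<kappa> C = \<kappa>' C" if C: "C \<in> components ends S" for C
  proof -
    obtain e where e: "e \<in> C"
      using components_nonempty[OF C] by blast
    have "\<kappa> C = cycle_colouring r E ends S \<kappa> e"
      using cycle_colouring_component[OF S(1) C e] by simp
    also have "\<dots> = cycle_colouring r E ends S' \<kappa>' e"
      using eq by simp
    also have "\<dots> = \<kappa>' C"
      using cycle_colouring_component[OF S'(1) _ e] C \<open>S = S'\<close> by simp
    finally show ?thesis .
  qed
  ultimately show ?thesis
    using S(2) S'(2) by (auto intro: PiE_ext)
qed

lemma sum_PiE_prod_eq_prod_power_sum: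
  "finite I \<Longrightarrow> (\<Sum>\<kappa>\<in>I \<rightarrow>\<^sub>E {1..<r}. \<Prod>C\<in>I. x (\<kappa> C) ^ k C) = (\<Prod>C\<in>I. power_sum r x (k C))"
  by (simp add: power_sum_def prod_sum_PiE)

definition colouring_weight ::
  "nat \<Rightarrow> (nat \<Rightarrow> complex) \<Rightarrow> complex \<Rightarrow> 'v set \<Rightarrow> 'e::linorder set \<Rightarrow> ('e \<Rightarrow> 'v \<times> 'v)
   \<Rightarrow> ('e \<Rightarrow> nat) \<Rightarrow> complex" where
  "colouring_weight r x t V E ends f = (\<Prod>v\<in>V. thmA r x t (deg E ends v) (colours_at E ends f v))"

context
  fixes V :: "'v set" and E :: "'e::linorder set" and ends :: "'e \<Rightarrow> 'v \<times> 'v"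
  assumes multigraph: "multigraph V E ends"
begin

lemma finite_edges: "finite E"
  using multigraph by (simp add: multigraph_def)

lemma finite_vertices: "finite V"
  using multigraph by (simp add: multigraph_def)

lemma verts_of_subset: "S \<subseteq> E \<Longrightarrow> verts_of ends S \<subseteq> V"
  using multigraph by (auto simp: multigraph_def verts_of_def hvert_def)

lemma card_le_card_vertices_if_is_cycle: "is_cycle E ends S \<Longrightarrow> card S \<le> card V"
  using card_verts_of_is_cycle card_mono[OF finite_vertices verts_of_subset]
    finite_subset[OF _ finite_edges] by (metis is_cycle_def)

lemma colouring_weight_cycle_colouring:
  assumes S: "is_cycle E ends S" and \<kappa>: "\<kappa> \<in> components ends S \<rightarrow>\<^sub>E {1..<r}"
  shows "colouring_weight r x t V E ends (cycle_colouring r E ends S \<kappa>)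
    = t ^ (card V - card S) * (\<Prod>C\<in>components ends S. x (\<kappa> C) ^ card C)"
proof -
  define w where "w v = thmA r x t (deg E ends v) (colours_at E ends (cycle_colouring r E ends S \<kappa>) v)"
    for v
  have SE: "S \<subseteq> E" and fin: "finite S"
    using S finite_edges by (auto simp: is_cycle_def intro: finite_subset)
  note support = support_edges_cycle_colouring[OF SE \<kappa>]
  have "colouring_weight r x t V E ends (cycle_colouring r E ends S \<kappa>)
      = prod w (V - verts_of ends S) * prod w (verts_of ends S)"
    unfolding colouring_weight_def w_def
    using prod.subset_diff[OF verts_of_subset[OF SE] finite_vertices] by simp
  also have "prod w (V - verts_of ends S) = t ^ (card V - card S)"
  proof -
    have "w v = t" if "v \<notin> verts_of ends S" for v
      unfolding w_def using that finite_edges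
      by (intro thmA_colours_at_neutral) (simp_all add: support mem_verts_of)
    then show ?thesis
      using card_Diff_subset[OF finite_subset[OF verts_of_subset[OF SE] finite_vertices]]
        verts_of_subset[OF SE] card_verts_of_is_cycle[OF S fin] by simp
  qed
  also have "prod w (verts_of ends S) = (\<Prod>C\<in>components ends S. prod w (verts_of ends C))"
    unfolding verts_of_Union_components[of ends S]
  proof (rule prod.UNION_disjoint)
    show "finite (components ends S)"
      using finite_components[OF fin] .
    show "\<forall>C\<in>components ends S. finite (verts_of ends C)"
      using finite_subset[OF components_subset fin, of _ ends] by simp
    show "\<forall>C\<in>components ends S. \<forall>C'\<in>components ends S. C \<noteq> C' \<longrightarrow>
        verts_of ends C \<inter> verts_of ends C' = {}"
      by (intro ballI impI verts_of_components_disjoint)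
  qed
  also have "\<dots> = (\<Prod>C\<in>components ends S. x (\<kappa> C) ^ card C)"
  proof (rule prod.cong[OF refl])
    fix C assume C: "C \<in> components ends S"
    have "w v = x (\<kappa> C)" if v: "v \<in> verts_of ends C" for v
    proof -
      have halfs: "halfs_at S ends v = halfs_at C ends v"
        using halfs_at_component[OF C v] by simp
      have "v \<in> verts_of ends S"
        using verts_of_mono[OF components_subset[OF C], of ends] v by (rule subsetD)
      then have "card (halfs_at C ends v) = 2"
        using deg_is_cycle[OF S fin] halfs by (metis deg_def)
      moreover have "\<forall>h\<in>halfs_at C ends v. cycle_colouring r E ends S \<kappa> (fst h) = \<kappa> C"
        using cycle_colouring_component[OF SE C] by simp
      ultimately show ?thesis
        unfolding w_def using finite_edges PiE_mem[OF \<kappa> C]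
        by (intro thmA_colours_at_pair) (simp_all add: support halfs)
    qed
    then show "prod w (verts_of ends C) = x (\<kappa> C) ^ card C"
      using card_verts_of_component[OF S fin C] by simp
  qed
  finally show ?thesis .
qed

lemma halfs_at_support_edges_if_weight_nonzero:
  fixes v :: 'v
  assumes "colouring_weight r x t V E ends f \<noteq> 0"
  defines "H \<equiv> halfs_at (support_edges r E f) ends v"
  shows "H = {} \<or> (\<exists>i\<in>{1..<r}. card H = 2 \<and> (\<forall>h\<in>H. f (fst h) = i))"
proof (cases "v \<in> V")
  case True
  then have "thmA r x t (deg E ends v) (colours_at E ends f v) \<noteq> 0"
    using assms(1) finite_vertices by (auto simp: colouring_weight_def)
  then show ?thesis
    unfolding H_def by (rule thmA_colours_at_nonzero[OF finite_edges])
next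
  case False
  then have "H = {}"
    using multigraph by (auto simp: H_def support_edges_def multigraph_def hvert_def split: if_splits)
  then show ?thesis ..
qed

lemma is_cycle_support_edges:
  assumes "colouring_weight r x t V E ends f \<noteq> 0"
  shows "is_cycle E ends (support_edges r E f)"
  unfolding is_cycle_def
proof (intro conjI allI)
  show "support_edges r E f \<subseteq> E"
    by (auto simp: support_edges_def)
  fix v
  show "deg (support_edges r E f) ends v = 0 \<or> deg (support_edges r E f) ends v = 2"
    using halfs_at_support_edges_if_weight_nonzero[OF assms, of v] by (auto simp: deg_def)
qed

lemma support_edges_adj_colour_eq:
  assumes "colouring_weight r x t V E ends f \<noteq> 0"
    and "(e, e') \<in> edge_adj ends (support_edges r E f)"
  shows "f e = f e'"
proof -
  obtain a b where "e \<in> support_edges r E f" "e' \<in> support_edges r E f"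
      "hvert ends (e, a) = hvert ends (e', b)"
    using assms(2) unfolding edge_adj_def by blast
  then have "(e, a) \<in> halfs_at (support_edges r E f) ends (hvert ends (e, a))"
    "(e', b) \<in> halfs_at (support_edges r E f) ends (hvert ends (e, a))"
    by simp_all
  moreover obtain i where "\<forall>h\<in>halfs_at (support_edges r E f) ends (hvert ends (e, a)). f (fst h) = i"
    using halfs_at_support_edges_if_weight_nonzero[OF assms(1), of "hvert ends (e, a)"] calculation
    by blast
  ultimately have "f (fst (e, a)) = i" "f (fst (e', b)) = i"
    by blast+
  then show ?thesis
    by simp
qed

lemma cycle_colouring_if_weight_nonzero:
  assumes f: "f \<in> E \<rightarrow>\<^sub>E {1..r}" and weight: "colouring_weight r x t V E ends f \<noteq> 0"
  defines "S \<equiv> support_edges r E f"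
  shows "\<exists>\<kappa>\<in>components ends S \<rightarrow>\<^sub>E {1..<r}. f = cycle_colouring r E ends S \<kappa>"
proof
  define \<kappa> where "\<kappa> = (\<lambda>C\<in>components ends S. f (SOME e. e \<in> C))"
  have \<kappa>_C: "\<kappa> C = f e" if C: "C \<in> components ends S" and e: "e \<in> C" for C e
  proof -
    have "(SOME e. e \<in> C) \<in> C"
      using components_nonempty[OF C] by (simp add: some_in_eq)
    then show ?thesis
      using components_const[where f = f, OF support_edges_adj_colour_eq[OF weight, folded S_def] C e]
      by (simp add: \<kappa>_def C)
  qed
  have f_S: "f e \<in> {1..<r}" if "e \<in> S" for e
    using that PiE_mem[OF f, of e] by (auto simp: S_def support_edges_def)
  show "\<kappa> \<in> components ends S \<rightarrow>\<^sub>E {1..<r}"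
  proof (rule PiE_I)
    fix C assume C: "C \<in> components ends S"
    then obtain e where "e \<in> C"
      using components_nonempty by blast
    then show "\<kappa> C \<in> {1..<r}"
      using \<kappa>_C[OF C] f_S components_subset[OF C] by auto
  qed (simp add: \<kappa>_def)
  show "f = cycle_colouring r E ends S \<kappa>"
  proof
    fix e
    show "f e = cycle_colouring r E ends S \<kappa> e"
    proof (cases "e \<in> S")
      case True
      then show ?thesis
        using \<kappa>_C[OF component_of_in_components mem_component_of]
        by (simp add: cycle_colouring_def S_def support_edges_def)
    next
      case False
      then show ?thesis
        using f by (auto simp: cycle_colouring_def S_def support_edges_def)
    qed
  qed
qed

lemma sum_colouring_weight:
  assumes "1 \<le> r"
  shows "(\<Sum>f\<in>E \<rightarrow>\<^sub>E {1..r}. colouring_weight r x t V E ends f)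
    = (\<Sum>S | is_cycle E ends S. t ^ (card V - card S) * power_sum_part r x (cycle_type ends S))"
proof -
  let ?\<Sigma> = "SIGMA S:{S. is_cycle E ends S}. components ends S \<rightarrow>\<^sub>E {1..<r}"
  let ?F = "\<lambda>(S, \<kappa>). cycle_colouring r E ends S \<kappa>"
  let ?W = "colouring_weight r x t V E ends"
  have finite: "finite S" if "is_cycle E ends S" for S
    using that finite_edges by (auto simp: is_cycle_def intro: finite_subset)
  have inj: "inj_on ?F ?\<Sigma>"
  proof (rule inj_onI)
    fix p q
    assume "p \<in> ?\<Sigma>" "q \<in> ?\<Sigma>" "?F p = ?F q"
    moreover obtain S \<kappa> S' \<kappa>' where "p = (S, \<kappa>)" "q = (S', \<kappa>')"
      by fastforce
    ultimately show "p = q"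
      using cycle_colouring_inject[where S = S and \<kappa> = \<kappa> and S' = S' and \<kappa>' = \<kappa>' and E = E]
      by (auto simp: is_cycle_def)
  qed
  have "(\<Sum>f\<in>E \<rightarrow>\<^sub>E {1..r}. ?W f) = (\<Sum>f\<in>?F ` ?\<Sigma>. ?W f)"
  proof (rule sum.mono_neutral_right)
    show "finite (E \<rightarrow>\<^sub>E {1..r})"
      by (simp add: finite_PiE finite_edges)
    have "cycle_colouring r E ends S \<kappa> \<in> E \<rightarrow>\<^sub>E {1..r}" if "(S, \<kappa>) \<in> ?\<Sigma>" for S \<kappa>
      using that by (intro cycle_colouring_PiE[OF assms]) simp
    then show "?F ` ?\<Sigma> \<subseteq> E \<rightarrow>\<^sub>E {1..r}"
      by (simp add: image_subset_iff)
    show "\<forall>f\<in>(E \<rightarrow>\<^sub>E {1..r}) - ?F ` ?\<Sigma>. ?W f = 0"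
    proof (rule ballI, rule ccontr)
      fix f assume f: "f \<in> (E \<rightarrow>\<^sub>E {1..r}) - ?F ` ?\<Sigma>" and weight: "?W f \<noteq> 0"
      then obtain \<kappa> where "\<kappa> \<in> components ends (support_edges r E f) \<rightarrow>\<^sub>E {1..<r}"
        "f = cycle_colouring r E ends (support_edges r E f) \<kappa>"
        using cycle_colouring_if_weight_nonzero by blast
      then have "f \<in> ?F ` ?\<Sigma>"
        using is_cycle_support_edges[OF weight] by force
      with f show False
        by blast
    qed
  qed
  also have "\<dots> = (\<Sum>(S, \<kappa>)\<in>?\<Sigma>. ?W (cycle_colouring r E ends S \<kappa>))"
    using sum.reindex[OF inj, of ?W] by (simp add: comp_def case_prod_unfold)
  also have "\<dots> = (\<Sum>S | is_cycle E ends S. \<Sum>\<kappa>\<in>components ends S \<rightarrow>\<^sub>E {1..<r}.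
      ?W (cycle_colouring r E ends S \<kappa>))"
    by (rule sum.Sigma[symmetric])
      (simp_all add: finite_cycles[OF finite_edges] finite_PiE finite_components finite)
  also have "\<dots> = (\<Sum>S | is_cycle E ends S. t ^ (card V - card S) * power_sum_part r x (cycle_type ends S))"
  proof (rule sum.cong[OF refl])
    fix S assume "S \<in> {S. is_cycle E ends S}"
    then have S: "is_cycle E ends S"
      by simp
    have "(\<Sum>\<kappa>\<in>components ends S \<rightarrow>\<^sub>E {1..<r}. ?W (cycle_colouring r E ends S \<kappa>))
        = (\<Sum>\<kappa>\<in>components ends S \<rightarrow>\<^sub>E {1..<r}.
            t ^ (card V - card S) * (\<Prod>C\<in>components ends S. x (\<kappa> C) ^ card C))"
      by (rule sum.cong[OF refl]) (rule colouring_weight_cycle_colouring[OF S])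
    also have "\<dots> = t ^ (card V - card S) * (\<Prod>C\<in>components ends S. power_sum r x (card C))"
      using sum_PiE_prod_eq_prod_power_sum[OF finite_components[OF finite[OF S], of ends],
          where r = r and x = x and k = card]
      by (simp add: sum_distrib_left[symmetric])
    finally show "(\<Sum>\<kappa>\<in>components ends S \<rightarrow>\<^sub>E {1..<r}. ?W (cycle_colouring r E ends S \<kappa>))
        = t ^ (card V - card S) * power_sum_part r x (cycle_type ends S)"
      by (simp add: power_sum_part_cycle_type)
  qed
  finally show ?thesis .
qed

end

theorem theorem2:
  fixes r :: nat and x :: "nat \<Rightarrow> complex" and t :: complex
    and V :: "'v set" and E :: "'e::linorder set" and ends :: "'e \<Rightarrow> 'v \<times> 'v"
  assumes "r \<ge> 2"
    and "multigraph V E ends"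
    and "\<forall>v\<in>V. deg E ends v \<ge> 1"
  shows "graph_fun r (thmA r x t) identity_mat V E ends =
    (\<Sum>lam \<in> partitions_upto (card V).
       t ^ (card V - sum_mset lam) * power_sum_part r x lam * of_nat (N_count E ends lam))"
proof -
  have "graph_fun r (thmA r x t) identity_mat V E ends
      = (\<Sum>f\<in>E \<rightarrow>\<^sub>E {1..r}. colouring_weight r x t V E ends f)"
    unfolding colouring_weight_def by (rule graph_fun_identity_mat[OF finite_edges[OF assms(2)]])
  also have "\<dots> = (\<Sum>S | is_cycle E ends S.
      t ^ (card V - card S) * power_sum_part r x (cycle_type ends S))"
    using sum_colouring_weight[OF assms(2)] assms(1) by simp
  also have "\<dots> = (\<Sum>lam \<in> partitions_upto (card V).
       t ^ (card V - sum_mset lam) * power_sum_part r x lam * of_nat (N_count E ends lam))"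
    using finite_edges[OF assms(2)] card_le_card_vertices_if_is_cycle[OF assms(2)]
    by (rule sum_cycles_by_type)
  finally show ?thesis .
qed

end
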